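(* Fix integers $k\ge 2$ and $1 \le t \le k/2$. Let $X$ be a set of $n$ elements with a fixed but unknown total order, and consider a $(k,t)$ scale, which on input any $k$-element subset of $X$ returns the $t$-th smallest element of that subset. Let $S$ be the set of the $t-1$ smallest elements of $X$ and $L$ the set of the $k-t$ largest elements of $X$. Then there is an off-line (non-adaptive) family of $O(n^{k-t+1})$ queries (for fixed $k,t$, as $n\to\infty$) from whose results the relative order of the elements of $X\setminus(S\cup L)$ can be determined, for every possible ordering of $X$. Together with the matching lower bound, this order $n^{k-t+1}$ is best possible.
   Context: A query is a $k$-element subset of $X$; the scale returns its $t$-th smallest element. In the off-line setting the whole family of queries must be specified in advance (without knowledge of any results), and all results are then revealed simultaneously. *)

theory Defs
  imports Complex_Main
begin

text \<open>The ground set is X = {..<n}. A (hidden) total order on X is encoded by a rank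
function sigma, a bijection from {..<n} onto {..<n}: sigma x is the 0-based rank of x.\<close>

definition is_ordering :: "nat \<Rightarrow> (nat \<Rightarrow> nat) \<Rightarrow> bool" where
  "is_ordering n \<sigma> \<longleftrightarrow> bij_betw \<sigma> {..<n} {..<n}"

definition scale_answer :: "(nat \<Rightarrow> nat) \<Rightarrow> nat \<Rightarrow> nat set \<Rightarrow> nat" where
  "scale_answer \<sigma> t Q = (THE x. x \<in> Q \<and> card {y \<in> Q. \<sigma> y < \<sigma> x} = t - 1)"

definition query_family :: "nat \<Rightarrow> nat \<Rightarrow> nat set set \<Rightarrow> bool" where
  "query_family n k F \<longleftrightarrow> (\<forall>Q\<in>F. Q \<subseteq> {..<n} \<and> card Q = k)"

text \<open>X minus (S union L): S = the t-1 smallest, L = the k-t largest elements.\<close>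
definition middle :: "nat \<Rightarrow> nat \<Rightarrow> nat \<Rightarrow> (nat \<Rightarrow> nat) \<Rightarrow> nat set" where
  "middle n k t \<sigma> = {x \<in> {..<n}. t - 1 \<le> \<sigma> x \<and> \<sigma> x < n - (k - t)}"

definition determines_middle :: "nat \<Rightarrow> nat \<Rightarrow> nat \<Rightarrow> nat set set \<Rightarrow> bool" where
  "determines_middle n k t F \<longleftrightarrow>
     (\<forall>\<sigma> \<tau>. is_ordering n \<sigma> \<longrightarrow> is_ordering n \<tau> \<longrightarrow>
        (\<forall>Q\<in>F. scale_answer \<sigma> t Q = scale_answer \<tau> t Q) \<longrightarrow>
        middle n k t \<sigma> = middle n k t \<tau> \<and>
        (\<forall>x\<in>middle n k t \<sigma>. \<forall>y\<in>middle n k t \<sigma>. \<sigma> x < \<sigma> y \<longleftrightarrow> \<tau> x < \<tau> y))"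

end

theory Submission
  imports Defs "HOL-Combinatorics.Transposition"
begin

text \<open>Fix the anchor \<open>{..<2 * k}\<close> and ask every \<open>k\<close>-set with at least \<open>t - 1\<close>
  anchor elements; there are \<open>O(2 ^ (2 * k) * n ^ (k - t + 1))\<close> of them, as such a set has at most
  \<open>k - t + 1\<close> elements outside the anchor. A middle element \<open>x\<close> is the answer of one of them:
  take \<open>t - 1\<close> elements below and \<open>k - t\<close> above \<open>x\<close>, preferring anchor elements; since the anchor
  has \<open>2 * k\<close> elements, one side supplies enough. For middle elements \<open>x\<close> below \<open>y\<close> choose in the
  same way a \<open>(k + 1)\<close>-set \<open>W \<supseteq> {x, y}\<close> with \<open>t\<close> anchor elements in which \<open>x\<close> has rank \<open>t - 1\<close>
  or \<open>t\<close>; then every \<open>W - {w}\<close> is asked, and these answers reveal which elements of \<open>W\<close> have rank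
  below \<open>t\<close> and which one has rank \<open>t\<close>, which separates \<open>x\<close> from \<open>y\<close>.

  Every \<open>(k - t + 2)\<close>-set \<open>B\<close> lies, up to one element, inside some query: otherwise
  put \<open>B\<close> on top of the order and swap its two lowest elements, which are middle elements; no
  answer changes. A query covers at most \<open>2 ^ k * 2 * n\<close> such sets \<open>B\<close>, so the family has at
  least \<open>(n choose (k - t + 2)) / (2 ^ (k + 1) * n)\<close> members.\<close>

definition rank_in :: "(nat \<Rightarrow> nat) \<Rightarrow> nat set \<Rightarrow> nat \<Rightarrow> nat" where
  "rank_in \<sigma> S w = card {y \<in> S. \<sigma> y < \<sigma> w}"

lemma rank_in_strict_mono:
  assumes "finite S" "u \<in> S" "v \<in> S" "\<sigma> u < \<sigma> v"
  shows "rank_in \<sigma> S u < rank_in \<sigma> S v"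
proof -
  have "{y \<in> S. \<sigma> y < \<sigma> u} \<subset> {y \<in> S. \<sigma> y < \<sigma> v}" using assms by auto
  then show ?thesis unfolding rank_in_def using assms(1) by (simp add: psubset_card_mono)
qed

lemma inj_on_rank_in:
  assumes "finite S" "inj_on \<sigma> S"
  shows "inj_on (rank_in \<sigma> S) S"
proof (rule inj_onI)
  fix u v assume uv: "u \<in> S" "v \<in> S" "rank_in \<sigma> S u = rank_in \<sigma> S v"
  then have "\<not> \<sigma> u < \<sigma> v" "\<not> \<sigma> v < \<sigma> u"
    using rank_in_strict_mono[OF assms(1)] by (metis less_irrefl)+
  then show "u = v" using inj_onD[OF assms(2) _ uv(1,2)] by simp
qed

lemma rank_in_less_iff:
  assumes "finite S" "inj_on \<sigma> S" "u \<in> S" "v \<in> S"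
  shows "rank_in \<sigma> S u < rank_in \<sigma> S v \<longleftrightarrow> \<sigma> u < \<sigma> v"
proof
  assume lt: "rank_in \<sigma> S u < rank_in \<sigma> S v"
  have "\<not> \<sigma> v < \<sigma> u" using rank_in_strict_mono[OF assms(1,4,3), of \<sigma>] lt by (meson less_asym)
  moreover have "u \<noteq> v" using lt by auto
  ultimately show "\<sigma> u < \<sigma> v" using inj_onD[OF assms(2) _ assms(3,4)] by fastforce
qed (rule rank_in_strict_mono[OF assms(1,3,4)])

lemma rank_in_less_card:
  assumes "finite S" "u \<in> S"
  shows "rank_in \<sigma> S u < card S"
proof -
  have "{y \<in> S. \<sigma> y < \<sigma> u} \<subset> S" using assms by auto
  then show ?thesis unfolding rank_in_def using assms(1) by (simp add: psubset_card_mono)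
qed

lemma bij_betw_rank_in:
  assumes "finite S" "inj_on \<sigma> S"
  shows "bij_betw (rank_in \<sigma> S) S {..<card S}"
proof -
  have "rank_in \<sigma> S ` S \<subseteq> {..<card S}" using rank_in_less_card assms by auto
  moreover have "card (rank_in \<sigma> S ` S) = card {..<card S}"
    using card_image[OF inj_on_rank_in[OF assms]] by simp
  ultimately show ?thesis
    using inj_on_rank_in[OF assms] by (simp add: bij_betw_def card_subset_eq)
qed

lemma rank_in_surj:
  assumes "finite S" "inj_on \<sigma> S" "i < card S"
  obtains u where "u \<in> S" "rank_in \<sigma> S u = i"
  using bij_betw_rank_in[OF assms(1,2)] assms(3) unfolding bij_betw_def by (metis imageE lessThan_iff)

lemma rank_in_subset_le:
  assumes "finite T" "S \<subseteq> T"
  shows "rank_in \<sigma> S u \<le> rank_in \<sigma> T u"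
  unfolding rank_in_def using assms by (intro card_mono) auto

lemma card_above_rank_in:
  assumes "finite S" "inj_on \<sigma> S" "u \<in> S"
  shows "card {y \<in> S. \<sigma> u < \<sigma> y} = card S - Suc (rank_in \<sigma> S u)"
proof -
  let ?L = "{y \<in> S. \<sigma> y < \<sigma> u}" and ?U = "{y \<in> S. \<sigma> u < \<sigma> y}"
  have "S = ?L \<union> insert u ?U"
    using assms(2,3) by auto (metis inj_onD linorder_neqE_nat)
  moreover have "card (?L \<union> insert u ?U) = card ?L + card (insert u ?U)"
    using assms(1) by (intro card_Un_disjoint) auto
  moreover have "card (insert u ?U) = Suc (card ?U)" using assms(1) by simp
  ultimately show ?thesis unfolding rank_in_def by simp
qed

lemma card_rank_in_less:
  assumes "finite S" "inj_on \<sigma> S" "i \<le> card S"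
  shows "card {w \<in> S. rank_in \<sigma> S w < i} = i"
proof -
  have "rank_in \<sigma> S ` {w \<in> S. rank_in \<sigma> S w < i} = {..<i}"
  proof (intro equalityI subsetI)
    fix j assume "j \<in> {..<i}"
    then obtain u where "u \<in> S" "rank_in \<sigma> S u = j"
      using rank_in_surj[OF assms(1,2), of j] assms(3) by auto
    then show "j \<in> rank_in \<sigma> S ` {w \<in> S. rank_in \<sigma> S w < i}" using \<open>j \<in> {..<i}\<close> by auto
  qed auto
  moreover have "inj_on (rank_in \<sigma> S) {w \<in> S. rank_in \<sigma> S w < i}"
    by (rule inj_on_subset[OF inj_on_rank_in[OF assms(1,2)]]) auto
  ultimately show ?thesis by (metis card_image card_lessThan)
qed

lemma scale_answer_eqI:
  assumes "finite Q" "inj_on \<sigma> Q" "u \<in> Q" "rank_in \<sigma> Q u = t - 1"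
  shows "scale_answer \<sigma> t Q = u"
  unfolding scale_answer_def
proof (rule the_equality)
  show "u \<in> Q \<and> card {y \<in> Q. \<sigma> y < \<sigma> u} = t - 1" using assms(3,4) by (simp add: rank_in_def)
next
  fix x assume "x \<in> Q \<and> card {y \<in> Q. \<sigma> y < \<sigma> x} = t - 1"
  then have "x \<in> Q" "rank_in \<sigma> Q x = rank_in \<sigma> Q u" using assms(4) by (auto simp: rank_in_def)
  then show "x = u" using inj_on_rank_in[OF assms(1,2)] assms(3) by (auto dest: inj_onD)
qed

lemma scale_answer_in_rank:
  assumes "finite Q" "inj_on \<sigma> Q" "1 \<le> t" "t \<le> card Q"
  shows "scale_answer \<sigma> t Q \<in> Q" "rank_in \<sigma> Q (scale_answer \<sigma> t Q) = t - 1"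
proof -
  have "t - 1 < card Q" using assms(3,4) by simp
  then obtain u where "u \<in> Q" "rank_in \<sigma> Q u = t - 1" by (rule rank_in_surj[OF assms(1,2)])
  then show "scale_answer \<sigma> t Q \<in> Q" "rank_in \<sigma> Q (scale_answer \<sigma> t Q) = t - 1"
    using scale_answer_eqI[OF assms(1,2)] by simp_all
qed

lemma scale_answer_eq_if_same_below:
  assumes "finite Q" "inj_on \<sigma> Q" "inj_on \<tau> Q" "1 \<le> t" "t \<le> card Q"
    and "\<And>y. y \<in> Q \<Longrightarrow> \<tau> y < \<tau> (scale_answer \<sigma> t Q) \<longleftrightarrow> \<sigma> y < \<sigma> (scale_answer \<sigma> t Q)"
  shows "scale_answer \<tau> t Q = scale_answer \<sigma> t Q"
proof -
  let ?a = "scale_answer \<sigma> t Q"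
  have "{y \<in> Q. \<tau> y < \<tau> ?a} = {y \<in> Q. \<sigma> y < \<sigma> ?a}" using assms(6) by auto
  then show ?thesis
    using scale_answer_in_rank[OF assms(1,2,4,5)]
    by (intro scale_answer_eqI[OF assms(1,3)]) (simp_all add: rank_in_def)
qed

lemma rank_in_remove:
  assumes "finite W" "w \<in> W" "u \<noteq> w"
  shows "rank_in \<sigma> (W - {w}) u = rank_in \<sigma> W u - (if \<sigma> w < \<sigma> u then 1 else 0)"
proof -
  have "{y \<in> W - {w}. \<sigma> y < \<sigma> u} = {y \<in> W. \<sigma> y < \<sigma> u} - {w}" by auto
  then show ?thesis unfolding rank_in_def using assms by (simp add: card_Diff_singleton_if)
qed

lemma scale_answer_remove:
  assumes "finite W" "card W = Suc k" "inj_on \<sigma> W" "1 \<le> t" "t \<le> k"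
    and \<alpha>: "\<alpha> \<in> W" "rank_in \<sigma> W \<alpha> = t" and \<beta>: "\<beta> \<in> W" "rank_in \<sigma> W \<beta> = t - 1"
    and "w \<in> W"
  shows "scale_answer \<sigma> t (W - {w}) = (if rank_in \<sigma> W w < t then \<alpha> else \<beta>)"
proof -
  have fin: "finite (W - {w})" and inj: "inj_on \<sigma> (W - {w})"
    using assms(1,3) by (auto intro: inj_on_subset)
  show ?thesis
  proof (cases "rank_in \<sigma> W w < t")
    case True
    have "\<alpha> \<noteq> w" using True \<alpha>(2) by auto
    moreover have "\<sigma> w < \<sigma> \<alpha>"
      using rank_in_less_iff[OF assms(1,3) \<open>w \<in> W\<close> \<alpha>(1)] True \<alpha>(2) by simp
    ultimately have "rank_in \<sigma> (W - {w}) \<alpha> = t - 1"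
      using rank_in_remove[OF assms(1) \<open>w \<in> W\<close>, of \<alpha> \<sigma>] \<alpha>(2) by simp
    with \<open>\<alpha> \<noteq> w\<close> \<alpha>(1) True show ?thesis using scale_answer_eqI[OF fin inj] by simp
  next
    case False
    have "\<beta> \<noteq> w" using False \<beta>(2) assms(4) by auto
    moreover have "\<sigma> \<beta> < \<sigma> w"
      using rank_in_less_iff[OF assms(1,3) \<beta>(1) \<open>w \<in> W\<close>] False \<beta>(2) assms(4) by linarith
    ultimately have "rank_in \<sigma> (W - {w}) \<beta> = t - 1"
      using rank_in_remove[OF assms(1) \<open>w \<in> W\<close>, of \<beta> \<sigma>] \<beta>(2) by simp
    with \<open>\<beta> \<noteq> w\<close> \<beta>(1) False show ?thesis using scale_answer_eqI[OF fin inj] by simp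
  qed
qed

lemma removal_answers_determine_low_ranks:
  assumes W: "finite W" "card W = Suc k" and inj: "inj_on \<sigma> W" "inj_on \<tau> W"
    and t: "1 \<le> t" "2 * t \<le> k"
    and agree: "\<forall>w\<in>W. scale_answer \<sigma> t (W - {w}) = scale_answer \<tau> t (W - {w})"
    and "u \<in> W"
  shows "rank_in \<sigma> W u < t \<longleftrightarrow> rank_in \<tau> W u < t" and "rank_in \<sigma> W u = t \<longleftrightarrow> rank_in \<tau> W u = t"
proof -
  have tk: "t \<le> k" and card: "t < card W" "t - 1 < card W" using t W(2) by auto
  obtain \<alpha> where \<alpha>: "\<alpha> \<in> W" "rank_in \<sigma> W \<alpha> = t" using rank_in_surj[OF W(1) inj(1) card(1)] .
  obtain \<beta> where \<beta>: "\<beta> \<in> W" "rank_in \<sigma> W \<beta> = t - 1" using rank_in_surj[OF W(1) inj(1) card(2)] .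
  obtain \<alpha>' where \<alpha>': "\<alpha>' \<in> W" "rank_in \<tau> W \<alpha>' = t" using rank_in_surj[OF W(1) inj(2) card(1)] .
  obtain \<beta>' where \<beta>': "\<beta>' \<in> W" "rank_in \<tau> W \<beta>' = t - 1" using rank_in_surj[OF W(1) inj(2) card(2)] .
  define f where "f w = scale_answer \<sigma> t (W - {w})" for w
  have f\<sigma>: "f w = (if rank_in \<sigma> W w < t then \<alpha> else \<beta>)" if "w \<in> W" for w
    using scale_answer_remove[OF W inj(1) t(1) tk \<alpha> \<beta> that] unfolding f_def .
  have f\<tau>: "f w = (if rank_in \<tau> W w < t then \<alpha>' else \<beta>')" if "w \<in> W" for w
    using scale_answer_remove[OF W inj(2) t(1) tk \<alpha>' \<beta>' that] agree that unfolding f_def by simp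
  have "\<alpha> \<noteq> \<beta>" "\<alpha>' \<noteq> \<beta>'" using \<alpha> \<beta> \<alpha>' \<beta>' t(1) by auto
  have "rank_in \<sigma> W w < t \<longleftrightarrow> f w = \<alpha>" if "w \<in> W" for w
    using f\<sigma>[OF that] \<open>\<alpha> \<noteq> \<beta>\<close> by simp
  moreover have "rank_in \<tau> W w < t \<longleftrightarrow> f w = \<alpha>'" if "w \<in> W" for w
    using f\<tau>[OF that] \<open>\<alpha>' \<noteq> \<beta>'\<close> by simp
  ultimately have low\<sigma>: "{w \<in> W. rank_in \<sigma> W w < t} = {w \<in> W. f w = \<alpha>}"
    and low\<tau>: "{w \<in> W. rank_in \<tau> W w < t} = {w \<in> W. f w = \<alpha>'}"
    by auto
  have card_low: "card {w \<in> W. f w = \<alpha>} = t" "card {w \<in> W. f w = \<alpha>'} = t"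
    using card_rank_in_less[OF W(1) inj(1), of t] card_rank_in_less[OF W(1) inj(2), of t]
      low\<sigma> low\<tau> card(1) by simp_all
  text \<open>The answer \<open>\<alpha>\<close> occurs \<open>t\<close> times, the answer \<open>\<beta>\<close> occurs \<open>k + 1 - t > t\<close> times.\<close>
  have "\<alpha>' = \<alpha>"
  proof (rule ccontr)
    assume "\<alpha>' \<noteq> \<alpha>"
    moreover have "f \<beta>' = \<alpha>'" using f\<tau>[OF \<beta>'(1)] \<beta>'(2) t(1) by simp
    ultimately have "\<alpha>' = \<beta>" using f\<sigma>[OF \<beta>'(1)] by (auto split: if_splits)
    then have "{w \<in> W. f w = \<alpha>'} = W - {w \<in> W. f w = \<alpha>}" using f\<sigma> \<open>\<alpha> \<noteq> \<beta>\<close> by auto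
    then have "t = Suc k - t" using card_low W by (simp add: card_Diff_subset)
    then show False using t by simp
  qed
  then show "rank_in \<sigma> W u < t \<longleftrightarrow> rank_in \<tau> W u < t" using low\<sigma> low\<tau> \<open>u \<in> W\<close> by blast
  have "rank_in \<sigma> W u = t \<longleftrightarrow> u = \<alpha>"
    using inj_onD[OF inj_on_rank_in[OF W(1) inj(1)] _ \<open>u \<in> W\<close> \<alpha>(1)] \<alpha>(2) by auto
  moreover have "rank_in \<tau> W u = t \<longleftrightarrow> u = \<alpha>'"
    using inj_onD[OF inj_on_rank_in[OF W(1) inj(2)] _ \<open>u \<in> W\<close> \<alpha>'(1)] \<alpha>'(2) by auto
  ultimately show "rank_in \<sigma> W u = t \<longleftrightarrow> rank_in \<tau> W u = t" using \<open>\<alpha>' = \<alpha>\<close> by simp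
qed

lemma removal_answers_determine_order:
  assumes W: "finite W" "card W = Suc k" and inj: "inj_on \<sigma> W" "inj_on \<tau> W"
    and t: "1 \<le> t" "2 * t \<le> k"
    and agree: "\<forall>w\<in>W. scale_answer \<sigma> t (W - {w}) = scale_answer \<tau> t (W - {w})"
    and xy: "x \<in> W" "y \<in> W" "\<sigma> x < \<sigma> y"
    and rank_x: "rank_in \<sigma> W x = t - 1 \<or> rank_in \<sigma> W x = t"
  shows "\<tau> x < \<tau> y"
proof -
  note low = removal_answers_determine_low_ranks[OF W inj t agree]
  have "rank_in \<sigma> W x < rank_in \<sigma> W y" using rank_in_less_iff[OF W(1) inj(1) xy(1,2)] xy(3) ..
  then have "rank_in \<tau> W x < rank_in \<tau> W y"
    using rank_x low[OF xy(1)] low[OF xy(2)] t(1) by auto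
  then show ?thesis using rank_in_less_iff[OF W(1) inj(2) xy(1,2)] by simp
qed

lemma ordering_inj_on: "is_ordering n \<sigma> \<Longrightarrow> S \<subseteq> {..<n} \<Longrightarrow> inj_on \<sigma> S"
  unfolding is_ordering_def bij_betw_def using inj_on_subset by blast

lemma ordering_less: "is_ordering n \<sigma> \<Longrightarrow> x < n \<Longrightarrow> \<sigma> x < n"
  unfolding is_ordering_def bij_betw_def by auto

lemma rank_in_lessThan_ordering:
  assumes "is_ordering n \<sigma>" "x < n"
  shows "rank_in \<sigma> {..<n} x = \<sigma> x"
proof -
  have "\<sigma> ` {u \<in> {..<n}. \<sigma> u < \<sigma> x} = {..<\<sigma> x}"
    using assms ordering_less[OF assms] unfolding is_ordering_def bij_betw_def
    by (auto simp: image_iff)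
  moreover have "inj_on \<sigma> {u \<in> {..<n}. \<sigma> u < \<sigma> x}" by (rule ordering_inj_on[OF assms(1)]) auto
  ultimately show ?thesis unfolding rank_in_def by (metis card_image card_lessThan)
qed

lemma card_above_ordering:
  assumes "is_ordering n \<sigma>" "x < n"
  shows "card {u \<in> {..<n}. \<sigma> x < \<sigma> u} = n - Suc (\<sigma> x)"
  using card_above_rank_in[OF _ ordering_inj_on[OF assms(1) order_refl]] assms
    rank_in_lessThan_ordering[OF assms] by simp

lemma card_prefix_le_below_above:
  assumes "is_ordering n \<sigma>" "x < n" "m \<le> n"
  shows "m \<le> card ({u \<in> {..<n}. \<sigma> u < \<sigma> x} \<inter> {..<m}) + card ({u \<in> {..<n}. \<sigma> x < \<sigma> u} \<inter> {..<m}) + 1"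
proof -
  let ?B = "{u \<in> {..<n}. \<sigma> u < \<sigma> x} \<inter> {..<m}" and ?A = "{u \<in> {..<n}. \<sigma> x < \<sigma> u} \<inter> {..<m}"
  have "{..<m} \<subseteq> ?B \<union> ?A \<union> {x}"
    using assms ordering_inj_on[OF assms(1) order_refl]
    by auto (metis inj_onD lessThan_iff linorder_neqE_nat less_le_trans)
  then have "m \<le> card (?B \<union> ?A \<union> {x})" using card_mono[of "?B \<union> ?A \<union> {x}" "{..<m}"] by simp
  also have "\<dots> \<le> card (?B \<union> ?A) + 1" using card_Un_le[of "?B \<union> ?A" "{x}"] by simp
  also have "\<dots> \<le> card ?B + card ?A + 1" using card_Un_le[of ?B ?A] by simp
  finally show ?thesis .
qed

lemma scale_answer_in_middle:
  assumes "is_ordering n \<sigma>" "Q \<subseteq> {..<n}" "card Q = k" "1 \<le> t" "t \<le> k"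
  shows "scale_answer \<sigma> t Q \<in> middle n k t \<sigma>"
proof -
  define u where "u = scale_answer \<sigma> t Q"
  have fin: "finite Q" using assms(2) finite_subset by blast
  have inj: "inj_on \<sigma> Q" using ordering_inj_on[OF assms(1,2)] .
  have u: "u \<in> Q" "rank_in \<sigma> Q u = t - 1"
    using scale_answer_in_rank[OF fin inj assms(4)] assms(3,5) unfolding u_def by auto
  have "u < n" using u(1) assms(2) by auto
  have "t - 1 \<le> \<sigma> u"
    using u(2) rank_in_subset_le[OF _ assms(2), of \<sigma> u] rank_in_lessThan_ordering[OF assms(1) \<open>u < n\<close>]
    by simp
  moreover have "k - t \<le> n - Suc (\<sigma> u)"
  proof -
    have "card {y \<in> Q. \<sigma> u < \<sigma> y} = k - t"
      using card_above_rank_in[OF fin inj u(1)] u(2) assms(3-5) by simp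
    moreover have "card {y \<in> Q. \<sigma> u < \<sigma> y} \<le> card {y \<in> {..<n}. \<sigma> u < \<sigma> y}"
      using assms(2) by (intro card_mono) auto
    ultimately show ?thesis using card_above_ordering[OF assms(1) \<open>u < n\<close>] by simp
  qed
  moreover have "\<sigma> u < n" using ordering_less[OF assms(1) \<open>u < n\<close>] .
  ultimately show ?thesis using \<open>u < n\<close> unfolding u_def middle_def by auto
qed

section \<open>Upper bound: anchored queries\<close>

lemma obtain_subset_with_card_meeting:
  assumes "finite S" "j \<le> card S"
  obtains T where "T \<subseteq> S" "card T = j" "min j (card (S \<inter> P)) \<le> card (T \<inter> P)"
proof (cases "j \<le> card (S \<inter> P)")
  case True
  then obtain T where T: "T \<subseteq> S \<inter> P" "card T = j" by (meson obtain_subset_with_card_n)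
  then have "T \<inter> P = T" by auto
  then show ?thesis using that[of T] T by simp
next
  case False
  have "card (S - P) = card S - card (S \<inter> P)"
    using assms(1) by (metis card_Diff_subset_Int Diff_Diff_Int Int_commute finite_Int)
  then have "j - card (S \<inter> P) \<le> card (S - P)" using assms(2) False by simp
  then obtain T' where T': "T' \<subseteq> S - P" "card T' = j - card (S \<inter> P)"
    by (meson obtain_subset_with_card_n)
  have "finite T'" using T'(1) assms(1) finite_subset by blast
  then have "card ((S \<inter> P) \<union> T') = card (S \<inter> P) + card T'"
    using T'(1) assms(1) by (intro card_Un_disjoint) auto
  moreover have "((S \<inter> P) \<union> T') \<inter> P = S \<inter> P" using T'(1) by auto
  ultimately show ?thesis using that[of "(S \<inter> P) \<union> T'"] T' False by auto
qed

lemma obtain_two_subsets_meeting: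
  assumes "finite A" "finite B" "A \<inter> B = {}" "a \<le> card A" "b \<le> card B"
  obtains T1 T2 where "T1 \<subseteq> A" "card T1 = a" "T2 \<subseteq> B" "card T2 = b"
    "min a (card (A \<inter> P)) + min b (card (B \<inter> P)) \<le> card ((T1 \<union> T2) \<inter> P)"
proof -
  obtain T1 where T1: "T1 \<subseteq> A" "card T1 = a" "min a (card (A \<inter> P)) \<le> card (T1 \<inter> P)"
    using obtain_subset_with_card_meeting[OF assms(1,4)] .
  obtain T2 where T2: "T2 \<subseteq> B" "card T2 = b" "min b (card (B \<inter> P)) \<le> card (T2 \<inter> P)"
    using obtain_subset_with_card_meeting[OF assms(2,5)] .
  have "finite T1" "finite T2" using T1(1) T2(1) assms(1,2) finite_subset by auto
  then have "card ((T1 \<inter> P) \<union> (T2 \<inter> P)) = card (T1 \<inter> P) + card (T2 \<inter> P)"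
    using T1(1) T2(1) assms(3) by (intro card_Un_disjoint) auto
  moreover have "(T1 \<union> T2) \<inter> P = (T1 \<inter> P) \<union> (T2 \<inter> P)" by auto
  ultimately show ?thesis using that T1 T2 by simp
qed

definition anchored_queries :: "nat \<Rightarrow> nat \<Rightarrow> nat \<Rightarrow> nat set set" where
  "anchored_queries n k t = {Q. Q \<subseteq> {..<n} \<and> card Q = k \<and> t - 1 \<le> card (Q \<inter> {..<2 * k})}"

lemma query_family_anchored_queries: "query_family n k (anchored_queries n k t)"
  unfolding query_family_def anchored_queries_def by auto

lemma middle_element_is_anchored_answer:
  assumes o: "is_ordering n \<sigma>" and x: "x \<in> middle n k t \<sigma>"
    and n: "2 * k \<le> n" and t: "1 \<le> t" "2 * t \<le> k"
  obtains Q where "Q \<in> anchored_queries n k t" "scale_answer \<sigma> t Q = x"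
proof -
  let ?P = "{..<2 * k}"
  let ?B = "{u \<in> {..<n}. \<sigma> u < \<sigma> x}" and ?A = "{u \<in> {..<n}. \<sigma> x < \<sigma> u}"
  have "x < n" "t - 1 \<le> \<sigma> x" "\<sigma> x < n - (k - t)" using x unfolding middle_def by auto
  moreover have "card ?B = \<sigma> x" using rank_in_lessThan_ordering[OF o \<open>x < n\<close>] by (simp add: rank_in_def)
  moreover have "card ?A = n - Suc (\<sigma> x)" using card_above_ordering[OF o \<open>x < n\<close>] .
  ultimately have sizes: "t - 1 \<le> card ?B" "k - t \<le> card ?A" by linarith+
  have "finite ?B" "finite ?A" "?B \<inter> ?A = {}" by auto
  then obtain T1 T2 where T: "T1 \<subseteq> ?B" "card T1 = t - 1" "T2 \<subseteq> ?A" "card T2 = k - t"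
      "min (t - 1) (card (?B \<inter> ?P)) + min (k - t) (card (?A \<inter> ?P)) \<le> card ((T1 \<union> T2) \<inter> ?P)"
    using sizes by (rule obtain_two_subsets_meeting)
  have "2 * k \<le> card (?B \<inter> ?P) + card (?A \<inter> ?P) + 1"
    using card_prefix_le_below_above[OF o \<open>x < n\<close> n] .
  then have "t - 1 \<le> card ((T1 \<union> T2) \<inter> ?P)" using T(5) t by (simp add: min_def split: if_splits)
  define Q where "Q = insert x (T1 \<union> T2)"
  have fin: "finite T1" "finite T2" using T(1,3) by (auto intro: finite_subset[of _ "{..<n}"])
  have "x \<notin> T1 \<union> T2" "T1 \<inter> T2 = {}" using T(1,3) by fastforce+
  then have "card Q = k" unfolding Q_def using fin T(2,4) t by (simp add: card_Un_disjoint)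
  moreover have "Q \<subseteq> {..<n}" unfolding Q_def using T(1,3) \<open>x < n\<close> by auto
  moreover have "t - 1 \<le> card (Q \<inter> ?P)"
    using \<open>t - 1 \<le> card ((T1 \<union> T2) \<inter> ?P)\<close> card_mono[of "Q \<inter> ?P" "(T1 \<union> T2) \<inter> ?P"]
    unfolding Q_def by fastforce
  ultimately have "Q \<in> anchored_queries n k t" unfolding anchored_queries_def by auto
  moreover have "{y \<in> Q. \<sigma> y < \<sigma> x} = T1" unfolding Q_def using T(1,3) by auto
  then have "rank_in \<sigma> Q x = t - 1" using T(2) by (simp add: rank_in_def)
  then have "scale_answer \<sigma> t Q = x"
    using scale_answer_eqI[OF _ ordering_inj_on[OF o \<open>Q \<subseteq> {..<n}\<close>]] fin unfolding Q_def by simp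
  ultimately show ?thesis using that by blast
qed

lemma remove_in_anchored_queries:
  assumes "W \<subseteq> {..<n}" "card W = Suc k" "t \<le> card (W \<inter> {..<2 * k})" "w \<in> W"
  shows "W - {w} \<in> anchored_queries n k t"
proof -
  have "card (W - {w}) = k" using assms(2,4) by (simp add: card_Diff_singleton_if)
  moreover have "(W - {w}) \<inter> {..<2 * k} = (W \<inter> {..<2 * k}) - {w}" by auto
  then have "t - 1 \<le> card ((W - {w}) \<inter> {..<2 * k})"
    using assms(3) by (simp add: card_Diff_singleton_if) arith
  ultimately show ?thesis using assms(1) unfolding anchored_queries_def by auto
qed

lemma obtain_sides_meeting_anchor:
  assumes o: "is_ordering n \<sigma>" and x: "x \<in> middle n k t \<sigma>" and y: "y \<in> middle n k t \<sigma>"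
    and xy: "\<sigma> x < \<sigma> y" and n: "2 * k \<le> n" and t: "1 \<le> t" "2 * t \<le> k"
  obtains T1 T2 where "T1 \<subseteq> {u \<in> {..<n}. \<sigma> u < \<sigma> x}" "T2 \<subseteq> {u \<in> {..<n}. \<sigma> x < \<sigma> u} - {y}"
    "card T1 = t - 1 \<or> card T1 = t" "card T1 + card T2 = k - 1" "t \<le> card ((T1 \<union> T2) \<inter> {..<2 * k})"
proof -
  let ?P = "{..<2 * k}"
  let ?B = "{u \<in> {..<n}. \<sigma> u < \<sigma> x}" and ?A = "{u \<in> {..<n}. \<sigma> x < \<sigma> u} - {y}"
  have "x < n" "y < n" "t - 1 \<le> \<sigma> x" "\<sigma> y < n - (k - t)"
    using x y unfolding middle_def by auto
  have card_B: "card ?B = \<sigma> x"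
    using rank_in_lessThan_ordering[OF o \<open>x < n\<close>] by (simp add: rank_in_def)
  have card_A: "card ?A = n - Suc (\<sigma> x) - 1"
    using card_above_ordering[OF o \<open>x < n\<close>] xy \<open>y < n\<close> by (simp add: card_Diff_singleton_if)
  have "2 * k \<le> card (?B \<inter> ?P) + card ({u \<in> {..<n}. \<sigma> x < \<sigma> u} \<inter> ?P) + 1"
    using card_prefix_le_below_above[OF o \<open>x < n\<close> n] .
  moreover have "card ({u \<in> {..<n}. \<sigma> x < \<sigma> u} \<inter> ?P) \<le> card (insert y (?A \<inter> ?P))"
    by (intro card_mono) auto
  moreover have "card (insert y (?A \<inter> ?P)) \<le> card (?A \<inter> ?P) + 1" by (simp add: card_insert_if)
  ultimately have P_split: "2 * k \<le> card (?B \<inter> ?P) + card (?A \<inter> ?P) + 2" by linarith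
  define j where "j = (if t \<le> card (?B \<inter> ?P) then t else t - 1)"
  have "card (?B \<inter> ?P) \<le> card ?B" by (intro card_mono) auto
  then have "j \<le> card ?B" using card_B \<open>t - 1 \<le> \<sigma> x\<close> unfolding j_def by auto
  moreover have "k - 1 - j \<le> card ?A" using card_A xy \<open>\<sigma> y < n - (k - t)\<close> unfolding j_def by auto
  ultimately have sizes: "j \<le> card ?B" "k - 1 - j \<le> card ?A" .
  have "finite ?B" "finite ?A" "?B \<inter> ?A = {}" by auto
  then obtain T1 T2 where T: "T1 \<subseteq> ?B" "card T1 = j" "T2 \<subseteq> ?A" "card T2 = k - 1 - j"
      "min j (card (?B \<inter> ?P)) + min (k - 1 - j) (card (?A \<inter> ?P)) \<le> card ((T1 \<union> T2) \<inter> ?P)"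
    using sizes by (rule obtain_two_subsets_meeting)
  have "t \<le> card ((T1 \<union> T2) \<inter> ?P)"
  proof (cases "t \<le> card (?B \<inter> ?P)")
    case True
    then show ?thesis using T(5) unfolding j_def by simp
  next
    case False
    then have "card (?B \<inter> ?P) + min (k - t) (card (?A \<inter> ?P)) \<le> card ((T1 \<union> T2) \<inter> ?P)"
      using T(5) t unfolding j_def by simp
    then show ?thesis using P_split t False by linarith
  qed
  moreover have "card T1 = t - 1 \<or> card T1 = t" "card T1 + card T2 = k - 1"
    using T(2,4) t unfolding j_def by auto
  ultimately show ?thesis using that[OF T(1,3)] by simp
qed

lemma obtain_anchored_extension:
  assumes o: "is_ordering n \<sigma>" and x: "x \<in> middle n k t \<sigma>" and y: "y \<in> middle n k t \<sigma>"
    and xy: "\<sigma> x < \<sigma> y" and n: "2 * k \<le> n" and t: "1 \<le> t" "2 * t \<le> k"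
  obtains W where "W \<subseteq> {..<n}" "card W = Suc k" "t \<le> card (W \<inter> {..<2 * k})" "x \<in> W" "y \<in> W"
    "rank_in \<sigma> W x = t - 1 \<or> rank_in \<sigma> W x = t"
proof -
  obtain T1 T2 where T: "T1 \<subseteq> {u \<in> {..<n}. \<sigma> u < \<sigma> x}" "T2 \<subseteq> {u \<in> {..<n}. \<sigma> x < \<sigma> u} - {y}"
    "card T1 = t - 1 \<or> card T1 = t" "card T1 + card T2 = k - 1" "t \<le> card ((T1 \<union> T2) \<inter> {..<2 * k})"
    using obtain_sides_meeting_anchor[OF o x y xy n t] .
  define W where "W = T1 \<union> T2 \<union> {x, y}"
  have below: "\<forall>u\<in>T1. u < n \<and> \<sigma> u < \<sigma> x" and above: "\<forall>u\<in>T2. u < n \<and> \<sigma> x < \<sigma> u \<and> u \<noteq> y"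
    using T(1,2) by auto
  have fin: "finite T1" "finite T2" using below above by (auto intro: finite_subset[of _ "{..<n}"])
  have "x < n" "y < n" using x y unfolding middle_def by auto
  then have W_sub: "W \<subseteq> {..<n}" unfolding W_def using below above by auto
  have "x \<notin> T1 \<union> T2" "y \<notin> T1 \<union> T2" "x \<noteq> y" "T1 \<inter> T2 = {}"
    using below above xy by (auto dest: less_asym)
  then have card_W: "card W = Suc k" unfolding W_def using fin T(4) t by (simp add: card_Un_disjoint)
  have "card ((T1 \<union> T2) \<inter> {..<2 * k}) \<le> card (W \<inter> {..<2 * k})"
    by (rule card_mono) (auto simp: W_def)
  then have anchor: "t \<le> card (W \<inter> {..<2 * k})" using T(5) by linarith
  have "{u \<in> W. \<sigma> u < \<sigma> x} = T1" unfolding W_def using below above xy by auto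
  then have "rank_in \<sigma> W x = t - 1 \<or> rank_in \<sigma> W x = t" using T(3) unfolding rank_in_def by simp
  moreover have "x \<in> W" "y \<in> W" unfolding W_def by simp_all
  ultimately show ?thesis using that[OF W_sub card_W anchor] by blast
qed

lemma anchored_queries_determine_order:
  assumes o: "is_ordering n \<sigma>" "is_ordering n \<tau>"
    and agree: "\<forall>Q\<in>anchored_queries n k t. scale_answer \<sigma> t Q = scale_answer \<tau> t Q"
    and x: "x \<in> middle n k t \<sigma>" and y: "y \<in> middle n k t \<sigma>" and xy: "\<sigma> x < \<sigma> y"
    and n: "2 * k \<le> n" and t: "1 \<le> t" "2 * t \<le> k"
  shows "\<tau> x < \<tau> y"
proof -
  obtain W where W: "W \<subseteq> {..<n}" "card W = Suc k" "t \<le> card (W \<inter> {..<2 * k})" "x \<in> W" "y \<in> W"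
    "rank_in \<sigma> W x = t - 1 \<or> rank_in \<sigma> W x = t"
    using obtain_anchored_extension[OF o(1) x y xy n t] .
  have "finite W" using W(1) finite_subset by blast
  moreover have "\<forall>w\<in>W. scale_answer \<sigma> t (W - {w}) = scale_answer \<tau> t (W - {w})"
    using agree remove_in_anchored_queries[OF W(1-3)] by simp
  ultimately show ?thesis
    using removal_answers_determine_order[OF _ W(2) ordering_inj_on[OF o(1) W(1)]
        ordering_inj_on[OF o(2) W(1)] t _ W(4,5) xy W(6)] by blast
qed

lemma anchored_queries_middle_subset:
  assumes o: "is_ordering n \<sigma>" "is_ordering n \<tau>"
    and agree: "\<forall>Q\<in>anchored_queries n k t. scale_answer \<sigma> t Q = scale_answer \<tau> t Q"
    and n: "2 * k \<le> n" and t: "1 \<le> t" "2 * t \<le> k"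
  shows "middle n k t \<sigma> \<subseteq> middle n k t \<tau>"
proof
  fix x assume "x \<in> middle n k t \<sigma>"
  then obtain Q where Q: "Q \<in> anchored_queries n k t" "scale_answer \<sigma> t Q = x"
    using middle_element_is_anchored_answer[OF o(1) _ n t] by blast
  then have "scale_answer \<tau> t Q = x" using agree by simp
  moreover have "Q \<subseteq> {..<n}" "card Q = k" using Q(1) unfolding anchored_queries_def by auto
  ultimately show "x \<in> middle n k t \<tau>" using scale_answer_in_middle[OF o(2)] t by fastforce
qed

lemma determines_middle_anchored_queries:
  assumes n: "2 * k \<le> n" and t: "1 \<le> t" "2 * t \<le> k"
  shows "determines_middle n k t (anchored_queries n k t)"
  unfolding determines_middle_def
proof (intro allI impI)
  fix \<sigma> \<tau> assume o: "is_ordering n \<sigma>" "is_ordering n \<tau>"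
    and agree: "\<forall>Q\<in>anchored_queries n k t. scale_answer \<sigma> t Q = scale_answer \<tau> t Q"
  then have agree': "\<forall>Q\<in>anchored_queries n k t. scale_answer \<tau> t Q = scale_answer \<sigma> t Q" by simp
  have mid: "middle n k t \<sigma> = middle n k t \<tau>"
    using anchored_queries_middle_subset[OF o agree n t] anchored_queries_middle_subset[OF o(2,1) agree' n t]
    by blast
  have "\<sigma> x < \<sigma> y \<longleftrightarrow> \<tau> x < \<tau> y" if "x \<in> middle n k t \<sigma>" "y \<in> middle n k t \<sigma>" for x y
    using anchored_queries_determine_order[OF o agree that _ n t]
      anchored_queries_determine_order[OF o(2,1) agree' that[unfolded mid] _ n t] by blast
  with mid show "middle n k t \<sigma> = middle n k t \<tau> \<and>
      (\<forall>x\<in>middle n k t \<sigma>. \<forall>y\<in>middle n k t \<sigma>. \<sigma> x < \<sigma> y \<longleftrightarrow> \<tau> x < \<tau> y)" by blast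
qed

lemma card_subsets_card_le:
  assumes "1 \<le> n"
  shows "card {A. A \<subseteq> {..<n::nat} \<and> card A \<le> m} \<le> (m + 1) * n ^ m"
proof -
  have "{A. A \<subseteq> {..<n} \<and> card A \<le> m} = (\<Union>j\<le>m. {A. A \<subseteq> {..<n} \<and> card A = j})" by auto
  then have "card {A. A \<subseteq> {..<n} \<and> card A \<le> m} \<le> (\<Sum>j\<le>m. card {A. A \<subseteq> {..<n} \<and> card A = j})"
    by (simp add: card_UN_le)
  also have "\<dots> = (\<Sum>j\<le>m. n choose j)" by (simp add: n_subsets)
  also have "\<dots> \<le> (\<Sum>j\<le>m. n ^ m)"
  proof (rule sum_mono)
    fix j assume "j \<in> {..m}"
    have "n choose j \<le> n ^ j" by (cases "j \<le> n") (auto simp: binomial_le_pow binomial_eq_0)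
    also have "\<dots> \<le> n ^ m" using \<open>j \<in> {..m}\<close> assms by (intro power_increasing) auto
    finally show "n choose j \<le> n ^ m" .
  qed
  finally show ?thesis by simp
qed

lemma card_anchored_queries:
  assumes "1 \<le> n" "1 \<le> t" "t \<le> k"
  shows "card (anchored_queries n k t) \<le> 2 ^ (2 * k) * ((k - t + 2) * n ^ (k - t + 1))"
proof -
  let ?P = "{..<2 * k}" and ?m = "k - t + 1"
  let ?S = "{A. A \<subseteq> {..<n::nat} \<and> card A \<le> ?m}"
  let ?split = "\<lambda>Q. (Q \<inter> ?P, Q - ?P)"
  have inj: "inj_on ?split (anchored_queries n k t)" by (rule inj_onI) (metis Int_Diff_Un prod.inject)
  have "?split ` anchored_queries n k t \<subseteq> Pow ?P \<times> ?S"
  proof (rule image_subsetI)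
    fix Q assume "Q \<in> anchored_queries n k t"
    then have Q: "Q \<subseteq> {..<n}" "card Q = k" "t - 1 \<le> card (Q \<inter> ?P)"
      unfolding anchored_queries_def by auto
    have "card (Q - ?P) = card Q - card (Q \<inter> ?P)" by (rule card_Diff_subset_Int) simp
    then have "card (Q - ?P) \<le> ?m" using Q(2,3) by linarith
    then show "?split Q \<in> Pow ?P \<times> ?S" using Q(1) by auto
  qed
  moreover have "finite ?S" by (rule finite_subset[of _ "Pow {..<n}"]) auto
  ultimately have "card (?split ` anchored_queries n k t) \<le> card (Pow ?P \<times> ?S)"
    by (intro card_mono) auto
  also have "\<dots> = 2 ^ (2 * k) * card ?S" by (simp add: card_cartesian_product card_Pow)
  also have "\<dots> \<le> 2 ^ (2 * k) * ((?m + 1) * n ^ ?m)"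
    using card_subsets_card_le[OF assms(1), of ?m] by (intro mult_le_mono2)
  finally show ?thesis using card_image[OF inj] by simp
qed

section \<open>Lower bound\<close>

lemma ordering_with_top_block:
  assumes "B \<subseteq> {..<n}"
  obtains \<sigma> where "is_ordering n \<sigma>" "bij_betw \<sigma> B {n - card B..<n}"
proof -
  have fin: "finite B" using assms finite_subset by blast
  have "card B \<le> n" using card_mono[OF _ assms] by simp
  then obtain f where f: "bij_betw f B {n - card B..<n}"
    using finite_same_card_bij[OF fin, of "{n - card B..<n}"] by auto
  have "card ({..<n} - B) = n - card B" using assms fin by (simp add: card_Diff_subset)
  then obtain g where g: "bij_betw g ({..<n} - B) {..<n - card B}"
    using finite_same_card_bij[of "{..<n} - B" "{..<n - card B}"] by auto
  define \<sigma> where "\<sigma> x = (if x \<in> B then f x else g x)" for x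
  have "bij_betw \<sigma> B {n - card B..<n}" using f by (rule bij_betw_cong[THEN iffD1, rotated]) (simp add: \<sigma>_def)
  moreover have "bij_betw \<sigma> ({..<n} - B) {..<n - card B}"
    using g by (rule bij_betw_cong[THEN iffD1, rotated]) (simp add: \<sigma>_def)
  ultimately have "bij_betw \<sigma> (B \<union> ({..<n} - B)) ({n - card B..<n} \<union> {..<n - card B})"
    by (rule bij_betw_combine) auto
  moreover have "B \<union> ({..<n} - B) = {..<n}" "{n - card B..<n} \<union> {..<n - card B} = {..<n}"
    using assms by auto
  ultimately show ?thesis using that \<open>bij_betw \<sigma> B {n - card B..<n}\<close> unfolding is_ordering_def by simp
qed

lemma scale_answer_notin_upper:
  assumes "finite Q" "inj_on \<sigma> Q" "1 \<le> t" "t \<le> card Q" "t \<le> card (Q - B)"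
    and above: "\<And>u v. u \<in> B \<Longrightarrow> v \<in> Q - B \<Longrightarrow> \<sigma> v < \<sigma> u"
  shows "scale_answer \<sigma> t Q \<notin> B"
proof
  let ?u = "scale_answer \<sigma> t Q"
  assume "?u \<in> B"
  then have "Q - B \<subseteq> {y \<in> Q. \<sigma> y < \<sigma> ?u}" using above by auto
  then have "card (Q - B) \<le> rank_in \<sigma> Q ?u" unfolding rank_in_def using assms(1) by (intro card_mono) auto
  then show False using scale_answer_in_rank(2)[OF assms(1-4)] assms(3,5) by simp
qed

lemma scale_answer_transpose_adjacent:
  assumes "finite Q" "inj_on \<sigma> (insert a (insert b Q))" "1 \<le> t" "t \<le> card Q"
    and "\<sigma> b = Suc (\<sigma> a)" and "scale_answer \<sigma> t Q \<notin> {a, b}"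
  shows "scale_answer (\<sigma> \<circ> transpose a b) t Q = scale_answer \<sigma> t Q"
proof (rule scale_answer_eq_if_same_below[OF assms(1) _ _ assms(3,4)])
  let ?u = "scale_answer \<sigma> t Q"
  have inj: "inj_on \<sigma> Q" using assms(2) by (rule inj_on_subset) auto
  then show "inj_on \<sigma> Q" .
  have "transpose a b ` Q \<subseteq> insert a (insert b Q)" by (auto simp: transpose_def)
  then show "inj_on (\<sigma> \<circ> transpose a b) Q"
    using assms(2) by (intro comp_inj_on) (auto intro: inj_on_subset)
  have "?u \<in> Q" using scale_answer_in_rank(1)[OF assms(1) inj assms(3,4)] .
  then have "\<sigma> ?u \<noteq> \<sigma> a" "\<sigma> ?u \<noteq> \<sigma> b"
    using inj_onD[OF assms(2), of ?u a] inj_onD[OF assms(2), of ?u b] assms(6) by auto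
  then show "(\<sigma> \<circ> transpose a b) y < (\<sigma> \<circ> transpose a b) ?u \<longleftrightarrow> \<sigma> y < \<sigma> ?u" for y
    using assms(5,6) by (auto simp: transpose_def)
qed

lemma scale_answer_swap_in_top_block:
  assumes o: "is_ordering n \<sigma>" and B: "B \<subseteq> {..<n}" "bij_betw \<sigma> B {n - card B..<n}"
    and ab: "a \<in> B" "b \<in> B" "\<sigma> b = Suc (\<sigma> a)"
    and Q: "Q \<subseteq> {..<n}" and t: "1 \<le> t" "t \<le> card (Q - B)"
  shows "scale_answer (\<sigma> \<circ> transpose a b) t Q = scale_answer \<sigma> t Q"
proof -
  have fin: "finite Q" using Q finite_subset by blast
  have tQ: "t \<le> card Q" using t(2) card_mono[OF fin, of "Q - B"] by simp
  have "\<sigma> v < \<sigma> u" if "u \<in> B" "v \<in> Q - B" for u v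
  proof -
    have "v < n" using that Q by auto
    then have "\<sigma> v \<notin> \<sigma> ` B"
      using inj_on_image_mem_iff[OF ordering_inj_on[OF o order_refl] _ B(1)] that(2) by auto
    then have "\<sigma> v < n - card B"
      using B(2) ordering_less[OF o \<open>v < n\<close>] unfolding bij_betw_def by auto
    moreover have "\<sigma> u \<in> {n - card B..<n}" using B(2) that(1) unfolding bij_betw_def by auto
    ultimately show ?thesis by simp
  qed
  then have "scale_answer \<sigma> t Q \<notin> B"
    using scale_answer_notin_upper[OF fin ordering_inj_on[OF o Q] t(1) tQ t(2)] by simp
  then have "scale_answer \<sigma> t Q \<notin> {a, b}" using ab by auto
  moreover have "inj_on \<sigma> (insert a (insert b Q))"
    by (rule ordering_inj_on[OF o]) (use Q ab B(1) in auto)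
  ultimately show ?thesis using scale_answer_transpose_adjacent[of Q \<sigma> a b t] fin t(1) tQ ab(3) by simp
qed

lemma determines_middle_covers:
  assumes qf: "query_family n k F" and det: "determines_middle n k t F"
    and B: "B \<subseteq> {..<n}" "card B = k - t + 2" and n: "k + 1 \<le> n" and t: "1 \<le> t" "2 * t \<le> k"
  shows "\<exists>Q\<in>F. card (B - Q) \<le> 1"
proof (rule ccontr)
  assume "\<not> ?thesis"
  then have far: "2 \<le> card (B - Q)" if "Q \<in> F" for Q using that by fastforce
  obtain \<sigma> where \<sigma>: "is_ordering n \<sigma>" "bij_betw \<sigma> B {n - card B..<n}"
    using ordering_with_top_block[OF B(1)] by metis
  have "n - card B \<in> \<sigma> ` B" "Suc (n - card B) \<in> \<sigma> ` B" using \<sigma>(2) B(2) n t unfolding bij_betw_def by auto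
  then obtain a b where ab: "a \<in> B" "\<sigma> a = n - card B" "b \<in> B" "\<sigma> b = Suc (\<sigma> a)" by (metis imageE)
  define \<tau> where "\<tau> = \<sigma> \<circ> transpose a b"
  have "a < n" "b < n" using ab B(1) by auto
  then have \<tau>: "is_ordering n \<tau>"
    using \<sigma>(1) bij_betw_trans[of "transpose a b" "{..<n}" "{..<n}" \<sigma> "{..<n}"]
    unfolding is_ordering_def \<tau>_def by simp
  have "scale_answer \<sigma> t Q = scale_answer \<tau> t Q" if "Q \<in> F" for Q
  proof -
    have Q: "Q \<subseteq> {..<n}" "card Q = k" "finite Q"
      using that qf finite_subset unfolding query_family_def by auto
    have "card (B - Q) = card B - card (Q \<inter> B)"
      using card_Diff_subset_Int[of B Q] Q(3) by (simp add: Int_commute)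
    moreover have "card (Q - B) = card Q - card (Q \<inter> B)" using Q(3) by (simp add: card_Diff_subset_Int)
    ultimately have "t \<le> card (Q - B)" using far[OF that] B(2) Q(2) t by linarith
    then show ?thesis
      unfolding \<tau>_def using scale_answer_swap_in_top_block[OF \<sigma>(1) B(1) \<sigma>(2) ab(1,3,4) Q(1) t(1)] by simp
  qed
  moreover have "a \<in> middle n k t \<sigma>" "b \<in> middle n k t \<sigma>"
    using ab \<open>a < n\<close> \<open>b < n\<close> B(2) n t unfolding middle_def by auto
  ultimately have "\<sigma> a < \<sigma> b \<longleftrightarrow> \<tau> a < \<tau> b" using det \<sigma>(1) \<tau> unfolding determines_middle_def by blast
  moreover have "\<tau> a = \<sigma> b" "\<tau> b = \<sigma> a" unfolding \<tau>_def by simp_all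
  ultimately show False using ab(4) by simp
qed

lemma card_subsets_nearly_covered:
  assumes qf: "query_family n k F" and "1 \<le> n"
    and cover: "\<And>B. B \<subseteq> {..<n} \<Longrightarrow> card B = s \<Longrightarrow> \<exists>Q\<in>F. card (B - Q) \<le> 1"
  shows "n choose s \<le> card F * (2 ^ k * (2 * n))"
proof -
  let ?E = "{A. A \<subseteq> {..<n::nat} \<and> card A \<le> 1}"
  define Sig where "Sig = (SIGMA Q:F. Pow Q \<times> ?E)"
  have F: "Q \<subseteq> {..<n}" "card Q = k" "finite Q" if "Q \<in> F" for Q
    using that qf finite_subset unfolding query_family_def by auto
  have "finite F" using qf unfolding query_family_def by (intro finite_subset[of F "Pow {..<n}"]) auto
  have "finite ?E" by (rule finite_subset[of _ "Pow {..<n}"]) auto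
  have "{B. B \<subseteq> {..<n} \<and> card B = s} \<subseteq> (\<lambda>(Q, D, e). D \<union> e) ` Sig"
  proof (rule subsetI)
    fix B assume "B \<in> {B. B \<subseteq> {..<n} \<and> card B = s}"
    then obtain Q where "Q \<in> F" "card (B - Q) \<le> 1" "B \<subseteq> {..<n}" using cover by blast
    then have "(Q, Q \<inter> B, B - Q) \<in> Sig" unfolding Sig_def by auto
    then show "B \<in> (\<lambda>(Q, D, e). D \<union> e) ` Sig" by (rule rev_image_eqI) auto
  qed
  moreover have "finite Sig" unfolding Sig_def using \<open>finite F\<close> F(3) \<open>finite ?E\<close> by auto
  ultimately have "card {B. B \<subseteq> {..<n} \<and> card B = s} \<le> card Sig"
    using card_mono[OF finite_imageI] card_image_le order_trans by meson
  then have "n choose s \<le> card Sig" by (simp add: n_subsets)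
  also have "\<dots> = (\<Sum>Q\<in>F. 2 ^ k * card ?E)"
    unfolding Sig_def using \<open>finite F\<close> F(2,3) \<open>finite ?E\<close>
    by (simp add: card_SigmaI card_cartesian_product card_Pow)
  also have "\<dots> \<le> card F * (2 ^ k * (2 * n))"
    using card_subsets_card_le[OF assms(2), of 1] by simp
  finally show ?thesis .
qed

lemma determines_middle_card_lower:
  assumes qf: "query_family n k F" and det: "determines_middle n k t F"
    and n: "k + 1 \<le> n" and t: "1 \<le> t" "2 * t \<le> k"
  shows "real n ^ (k - t + 1) \<le> real (k - t + 2) ^ (k - t + 2) * 2 ^ (k + 1) * real (card F)"
proof -
  let ?s = "k - t + 2" and ?m = "k - t + 1"
  have "?s \<le> n" "1 \<le> n" "?s = Suc ?m" using n t by auto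
  have "n choose ?s \<le> card F * (2 ^ k * (2 * n))"
    using card_subsets_nearly_covered[OF qf \<open>1 \<le> n\<close>] determines_middle_covers[OF qf det _ _ n t]
    by blast
  then have "(real n / real ?s) ^ ?s \<le> real (card F) * 2 ^ (k + 1) * real n"
    using binomial_ge_n_over_k_pow_k[OF \<open>?s \<le> n\<close>, where 'a = real] of_nat_mono[where 'a = real]
    by (fastforce simp: mult_ac)
  then have "real n ^ ?s \<le> (real (card F) * 2 ^ (k + 1) * real n) * real ?s ^ ?s"
    using \<open>?s = Suc ?m\<close>
    by (simp only: power_divide divide_le_eq zero_less_power of_nat_0_less_iff zero_less_Suc)
  then have "real n * real n ^ ?m \<le> real n * (real ?s ^ ?s * 2 ^ (k + 1) * real (card F))"
    using \<open>?s = Suc ?m\<close> by (simp add: mult_ac)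
  then show ?thesis using \<open>1 \<le> n\<close> by simp
qed

lemma anchored_queries_upper:
  assumes n: "2 * k \<le> n" and t: "1 \<le> t" "2 * t \<le> k"
  shows "\<exists>F. query_family n k F \<and> determines_middle n k t F
    \<and> real (card F) \<le> 2 ^ (2 * k) * real (k - t + 2) * real n ^ (k - t + 1)"
proof -
  have "card (anchored_queries n k t) \<le> 2 ^ (2 * k) * ((k - t + 2) * n ^ (k - t + 1))"
    using card_anchored_queries n t by simp
  then have "real (card (anchored_queries n k t)) \<le> real (2 ^ (2 * k) * ((k - t + 2) * n ^ (k - t + 1)))"
    by (simp only: of_nat_le_iff)
  also have "\<dots> = 2 ^ (2 * k) * real (k - t + 2) * real n ^ (k - t + 1)"
    by (simp only: of_nat_mult of_nat_power of_nat_numeral mult.assoc)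
  finally show ?thesis
    using query_family_anchored_queries determines_middle_anchored_queries[OF n t] by blast
qed

theorem mainTheorem4:
  fixes k t :: nat
  assumes "k \<ge> 2" and "1 \<le> t" and "2 * t \<le> k"
  shows "(\<exists>C::real. \<forall>\<^sub>F n in sequentially. \<exists>F. query_family n k F \<and> determines_middle n k t F
            \<and> real (card F) \<le> C * real n ^ (k - t + 1))
       \<and> (\<exists>c::real. c > 0 \<and> (\<forall>\<^sub>F n in sequentially. \<forall>F. query_family n k F \<longrightarrow> determines_middle n k t F
            \<longrightarrow> c * real n ^ (k - t + 1) \<le> real (card F)))"
proof
  show "\<exists>C::real. \<forall>\<^sub>F n in sequentially. \<exists>F. query_family n k F \<and> determines_middle n k t F
      \<and> real (card F) \<le> C * real n ^ (k - t + 1)"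
    using anchored_queries_upper[OF _ assms(2,3)]
    by (intro exI[of _ "2 ^ (2 * k) * real (k - t + 2)"] eventually_sequentiallyI) blast
  let ?K = "real (k - t + 2) ^ (k - t + 2) * 2 ^ (k + 1)"
  show "\<exists>c::real. c > 0 \<and> (\<forall>\<^sub>F n in sequentially. \<forall>F. query_family n k F \<longrightarrow> determines_middle n k t F
      \<longrightarrow> c * real n ^ (k - t + 1) \<le> real (card F))"
  proof (intro exI[of _ "1 / ?K"] conjI eventually_sequentiallyI allI impI)
    fix n F assume "k + 1 \<le> n" "query_family n k F" "determines_middle n k t F"
    then have "real n ^ (k - t + 1) \<le> ?K * real (card F)"
      using determines_middle_card_lower assms(2,3) by (simp add: mult.assoc)
    then show "1 / ?K * real n ^ (k - t + 1) \<le> real (card F)" by (simp add: divide_le_eq mult.commute)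
  qed simp
qed

end
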